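(* Let $n\ge1$ and let $F,G$ be continuous functions with $0<F(r),G(r)<+\infty$ on an interval $(r_i^-,r_i^+)\subset(0,+\infty)$. Set $a(r)=r^n\sqrt{G(r)/F(r)}$ and $b(r)=r^n\sqrt{F(r)/G(r)}$. If $r_i^->0$, the three statements $\int_{r_i^-}\frac{dr}{b(r)}=+\infty$, $\int_{r_i^-}a(r)\,dr=+\infty$ and $\int_{r_i^-}\sqrt{a(r)/b(r)}\,dr=+\infty$ are equivalent. If $r_i^+$ is finite, the three statements $\int^{r_i^+}\frac{dr}{b(r)}=+\infty$, $\int^{r_i^+}a(r)\,dr=+\infty$ and $\int^{r_i^+}\sqrt{a(r)/b(r)}\,dr=+\infty$ are equivalent.
   Context: Notation: $\int_{r_0}f$ means $\int_{r_0}^{r_0+\varepsilon}f$ and $\int^{r_1}f$ means $\int_{r_1-\varepsilon}^{r_1}f$ for small $\varepsilon>0$. *)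

theory Defs
  imports "HOL-Analysis.Analysis"
begin

definition int_diverges_at_left :: "(real \<Rightarrow> real) \<Rightarrow> real \<Rightarrow> bool" where
  "int_diverges_at_left f r0 \<longleftrightarrow>
     (\<exists>\<delta>>0. \<forall>\<epsilon>. 0 < \<epsilon> \<and> \<epsilon> < \<delta> \<longrightarrow>
        (\<integral>\<^sup>+ x\<in>{r0<..<r0+\<epsilon>}. ennreal (f x) \<partial>lborel) = \<infinity>)"

definition int_diverges_at_right :: "(real \<Rightarrow> real) \<Rightarrow> real \<Rightarrow> bool" where
  "int_diverges_at_right f r1 \<longleftrightarrow>
     (\<exists>\<delta>>0. \<forall>\<epsilon>. 0 < \<epsilon> \<and> \<epsilon> < \<delta> \<longrightarrow>
        (\<integral>\<^sup>+ x\<in>{r1-\<epsilon><..<r1}. ennreal (f x) \<partial>lborel) = \<infinity>)"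

end

theory Submission
  imports Defs
begin

text \<open>With \<open>h = sqrt (G / F)\<close> the three integrands are \<open>a = r\<^sup>n h\<close>, \<open>1 / b = h / r\<^sup>n\<close>
  and \<open>sqrt (a / b) = h\<close>. Near an endpoint lying in \<open>(0, \<infinity>)\<close> the factor \<open>r\<^sup>n\<close> is bounded
  above and away from zero, so the three integrands are comparable up to constant factors, and
  divergence of an integral of a nonnegative function is invariant under such comparisons.\<close>

definition comparable_on :: "'a set \<Rightarrow> ('a \<Rightarrow> real) \<Rightarrow> ('a \<Rightarrow> real) \<Rightarrow> bool" where
  "comparable_on S f g \<longleftrightarrow> (\<exists>c>0. \<forall>x\<in>S. f x \<le> c * g x \<and> g x \<le> c * f x)"

lemma comparable_on_sym: "comparable_on S f g \<Longrightarrow> comparable_on S g f"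
  unfolding comparable_on_def by blast

lemma comparable_on_subset: "comparable_on T f g \<Longrightarrow> S \<subseteq> T \<Longrightarrow> comparable_on S f g"
  unfolding comparable_on_def by blast

lemma comparable_on_trans:
  assumes "comparable_on S f g" "comparable_on S g h"
  shows "comparable_on S f h"
proof -
  obtain c d where c: "c > 0" "\<forall>x\<in>S. f x \<le> c * g x \<and> g x \<le> c * f x"
    and d: "d > 0" "\<forall>x\<in>S. g x \<le> d * h x \<and> h x \<le> d * g x"
    using assms unfolding comparable_on_def by blast
  have "f x \<le> (c * d) * h x \<and> h x \<le> (c * d) * f x" if "x \<in> S" for x
  proof -
    have "f x \<le> c * (d * h x)" "h x \<le> d * (c * f x)"
      using c d that by (meson mult_left_mono order_trans less_imp_le)+
    then show ?thesis by (simp add: ac_simps)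
  qed
  with c d show ?thesis unfolding comparable_on_def by (intro exI[of _ "c * d"]) auto
qed

lemma comparable_on_cong:
  "comparable_on S f g \<Longrightarrow> (\<And>x. x \<in> S \<Longrightarrow> f x = f' x) \<Longrightarrow> comparable_on S f' g"
  unfolding comparable_on_def by auto

lemma comparable_on_refl: "(\<And>x. x \<in> S \<Longrightarrow> f x \<ge> 0) \<Longrightarrow> comparable_on S f f"
  unfolding comparable_on_def by (intro exI[of _ 1]) auto

lemma comparable_on_mult_bounded:
  fixes t h :: "'a \<Rightarrow> real"
  assumes L: "0 < L" and t: "\<And>x. x \<in> S \<Longrightarrow> L \<le> t x \<and> t x \<le> K"
    and h: "\<And>x. x \<in> S \<Longrightarrow> h x \<ge> 0"
  shows "comparable_on S (\<lambda>x. t x * h x) h"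
  unfolding comparable_on_def
proof (intro exI[of _ "\<bar>K\<bar> + 1 / L"] conjI ballI)
  show "\<bar>K\<bar> + 1 / L > 0" using L by (simp add: add_nonneg_pos)
  fix x assume x: "x \<in> S"
  have "0 < 1 / L" using L by simp
  then have "t x \<le> \<bar>K\<bar> + 1 / L" using t[OF x] abs_ge_self[of K] by linarith
  then show "t x * h x \<le> (\<bar>K\<bar> + 1 / L) * h x" using h[OF x] by (rule mult_right_mono)
  have "1 \<le> t x / L" "t x / L \<le> (\<bar>K\<bar> + 1 / L) * t x"
    using t[OF x] L by (auto simp: field_simps)
  then have "1 \<le> (\<bar>K\<bar> + 1 / L) * t x" by linarith
  then show "h x \<le> (\<bar>K\<bar> + 1 / L) * (t x * h x)"
    using mult_right_mono[OF _ h[OF x]] by (fastforce simp: mult.assoc)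
qed

lemma comparable_on_divide_bounded:
  fixes t h :: "'a \<Rightarrow> real"
  assumes L: "0 < L" and t: "\<And>x. x \<in> S \<Longrightarrow> L \<le> t x \<and> t x \<le> K"
    and h: "\<And>x. x \<in> S \<Longrightarrow> h x \<ge> 0"
  shows "comparable_on S (\<lambda>x. h x / t x) h"
proof -
  have "0 < inverse (max K L)" using L by simp
  moreover have "inverse (max K L) \<le> inverse (t x) \<and> inverse (t x) \<le> inverse L" if "x \<in> S" for x
  proof -
    have "0 < t x" using L t[OF that] by linarith
    with L t[OF that] show ?thesis by (auto intro!: le_imp_inverse_le)
  qed
  ultimately have "comparable_on S (\<lambda>x. inverse (t x) * h x) h"
    using h by (rule comparable_on_mult_bounded)
  then show ?thesis by (simp add: divide_inverse mult.commute)
qed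

lemma nn_integral_eq_top_if_le_cmult:
  fixes f g :: "real \<Rightarrow> real"
  assumes S: "S \<in> sets borel" and g: "continuous_on S g"
    and c: "c \<ge> 0" and le: "\<And>x. x \<in> S \<Longrightarrow> f x \<le> c * g x"
    and f: "(\<integral>\<^sup>+ x\<in>S. ennreal (f x) \<partial>lborel) = \<infinity>"
  shows "(\<integral>\<^sup>+ x\<in>S. ennreal (g x) \<partial>lborel) = \<infinity>"
proof -
  have "(\<lambda>x. ennreal (indicator S x *\<^sub>R g x)) \<in> borel_measurable lborel"
    using borel_measurable_continuous_on_indicator[OF S g] by measurable
  moreover have "(\<lambda>x. ennreal (indicator S x *\<^sub>R g x)) = (\<lambda>x. ennreal (g x) * indicator S x)"
    by (auto simp: indicator_def)
  ultimately have meas: "(\<lambda>x. ennreal (g x) * indicator S x) \<in> borel_measurable lborel"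
    by simp
  have "\<infinity> = (\<integral>\<^sup>+ x\<in>S. ennreal (f x) \<partial>lborel)" using f by simp
  also have "\<dots> \<le> (\<integral>\<^sup>+ x. ennreal c * (ennreal (g x) * indicator S x) \<partial>lborel)"
    using le c by (intro nn_integral_mono) (auto simp: indicator_def ennreal_mult'[symmetric] intro: ennreal_leI)
  also have "\<dots> = ennreal c * (\<integral>\<^sup>+ x\<in>S. ennreal (g x) \<partial>lborel)"
    using meas by (rule nn_integral_cmult)
  finally show ?thesis by (simp add: top_unique ennreal_mult_eq_top_iff)
qed

lemma nn_integral_eq_top_iff_comparable:
  fixes f g :: "real \<Rightarrow> real"
  assumes "S \<in> sets borel" "comparable_on S f g" "continuous_on S f" "continuous_on S g"
  shows "(\<integral>\<^sup>+ x\<in>S. ennreal (f x) \<partial>lborel) = \<infinity> \<longleftrightarrow> (\<integral>\<^sup>+ x\<in>S. ennreal (g x) \<partial>lborel) = \<infinity>"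
  using assms nn_integral_eq_top_if_le_cmult[of S f _ g] nn_integral_eq_top_if_le_cmult[of S g _ f]
  unfolding comparable_on_def by (meson less_imp_le)

lemma int_diverges_at_left_iff_eventually:
  "int_diverges_at_left f r0 \<longleftrightarrow>
     (\<forall>\<^sub>F \<epsilon> in at_right 0. (\<integral>\<^sup>+ x\<in>{r0<..<r0+\<epsilon>}. ennreal (f x) \<partial>lborel) = \<infinity>)"
  unfolding int_diverges_at_left_def eventually_at_right_field by auto

lemma int_diverges_at_right_iff_eventually:
  "int_diverges_at_right f r1 \<longleftrightarrow>
     (\<forall>\<^sub>F \<epsilon> in at_right 0. (\<integral>\<^sup>+ x\<in>{r1-\<epsilon><..<r1}. ennreal (f x) \<partial>lborel) = \<infinity>)"
  unfolding int_diverges_at_right_def eventually_at_right_field by auto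

lemma int_diverges_at_left_iff_comparable:
  assumes "\<delta> > 0" "comparable_on {r0<..<r0+\<delta>} f g"
    "continuous_on {r0<..<r0+\<delta>} f" "continuous_on {r0<..<r0+\<delta>} g"
  shows "int_diverges_at_left f r0 \<longleftrightarrow> int_diverges_at_left g r0"
  unfolding int_diverges_at_left_iff_eventually
proof (rule eventually_cong)
  show "\<forall>\<^sub>F \<epsilon> in at_right 0. \<epsilon> < \<delta>" using \<open>\<delta> > 0\<close> eventually_at_right_field by blast
  fix \<epsilon> :: real assume "\<epsilon> < \<delta>"
  then have "{r0<..<r0+\<epsilon>} \<subseteq> {r0<..<r0+\<delta>}" by auto
  with assms show "(\<integral>\<^sup>+ x\<in>{r0<..<r0+\<epsilon>}. ennreal (f x) \<partial>lborel) = \<infinity> \<longleftrightarrow>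
      (\<integral>\<^sup>+ x\<in>{r0<..<r0+\<epsilon>}. ennreal (g x) \<partial>lborel) = \<infinity>"
    by (intro nn_integral_eq_top_iff_comparable)
      (auto intro: comparable_on_subset continuous_on_subset)
qed

lemma int_diverges_at_right_iff_comparable:
  assumes "\<delta> > 0" "comparable_on {r1-\<delta><..<r1} f g"
    "continuous_on {r1-\<delta><..<r1} f" "continuous_on {r1-\<delta><..<r1} g"
  shows "int_diverges_at_right f r1 \<longleftrightarrow> int_diverges_at_right g r1"
  unfolding int_diverges_at_right_iff_eventually
proof (rule eventually_cong)
  show "\<forall>\<^sub>F \<epsilon> in at_right 0. \<epsilon> < \<delta>" using \<open>\<delta> > 0\<close> eventually_at_right_field by blast
  fix \<epsilon> :: real assume "\<epsilon> < \<delta>"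
  then have "{r1-\<epsilon><..<r1} \<subseteq> {r1-\<delta><..<r1}" by auto
  with assms show "(\<integral>\<^sup>+ x\<in>{r1-\<epsilon><..<r1}. ennreal (f x) \<partial>lborel) = \<infinity> \<longleftrightarrow>
      (\<integral>\<^sup>+ x\<in>{r1-\<epsilon><..<r1}. ennreal (g x) \<partial>lborel) = \<infinity>"
    by (intro nn_integral_eq_top_iff_comparable)
      (auto intro: comparable_on_subset continuous_on_subset)
qed

lemma radial_weights_comparable:
  fixes F G :: "real \<Rightarrow> real" and n :: nat
  assumes lo: "0 < lo" and S: "S \<subseteq> {lo..hi}" and FG: "\<And>r. r \<in> S \<Longrightarrow> F r > 0 \<and> G r > 0"
  defines "a \<equiv> \<lambda>r. r ^ n * sqrt (G r / F r)" and "b \<equiv> \<lambda>r. r ^ n * sqrt (F r / G r)"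
  shows "comparable_on S (\<lambda>r. 1 / b r) a" and "comparable_on S a (\<lambda>r. sqrt (a r / b r))"
proof -
  define h where "h = (\<lambda>r. sqrt (G r / F r))"
  have h: "h r \<ge> 0" if "r \<in> S" for r using FG[OF that] by (simp add: h_def)
  have pow: "lo ^ n \<le> r ^ n \<and> r ^ n \<le> hi ^ n" if "r \<in> S" for r
  proof -
    have "lo \<le> r" "r \<le> hi" using S that by auto
    with lo show ?thesis by (auto intro: power_mono)
  qed
  have "comparable_on S a h"
    using comparable_on_mult_bounded[where t = "\<lambda>r. r ^ n", OF zero_less_power[OF lo] pow h]
    by (simp add: a_def h_def)
  moreover have "comparable_on S (\<lambda>r. 1 / b r) h"
  proof (rule comparable_on_cong)
    show "comparable_on S (\<lambda>r. h r / r ^ n) h"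
      using comparable_on_divide_bounded[where t = "\<lambda>r. r ^ n", OF zero_less_power[OF lo] pow h] .
    show "h r / r ^ n = 1 / b r" for r
      by (simp add: b_def h_def real_sqrt_divide)
  qed
  moreover have "comparable_on S (\<lambda>r. sqrt (a r / b r)) h"
  proof (rule comparable_on_cong[OF comparable_on_refl[OF h]])
    fix r assume r: "r \<in> S"
    then have "r > 0" using S lo by force
    with FG[OF r] show "h r = sqrt (a r / b r)"
      by (simp add: a_def b_def h_def real_sqrt_divide)
  qed
  ultimately show "comparable_on S (\<lambda>r. 1 / b r) a" "comparable_on S a (\<lambda>r. sqrt (a r / b r))"
    by (meson comparable_on_sym comparable_on_trans)+
qed

lemma radial_weights_continuous:
  fixes F G :: "real \<Rightarrow> real" and n :: nat
  assumes "S \<subseteq> {0<..}" "continuous_on S F" "continuous_on S G"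
    and FG: "\<And>r. r \<in> S \<Longrightarrow> F r > 0 \<and> G r > 0"
  defines "a \<equiv> \<lambda>r. r ^ n * sqrt (G r / F r)" and "b \<equiv> \<lambda>r. r ^ n * sqrt (F r / G r)"
  shows "continuous_on S a" "continuous_on S (\<lambda>r. 1 / b r)" "continuous_on S (\<lambda>r. sqrt (a r / b r))"
  using assms unfolding a_def b_def by (intro continuous_intros; force dest: FG)+

theorem lemma5p4:
  fixes n :: nat and F G :: "real \<Rightarrow> real" and rm :: real and rp :: ereal
  assumes n: "n \<ge> 1"
    and rm: "0 \<le> rm" and rmp: "ereal rm < rp"
    and contF: "continuous_on {r. rm < r \<and> ereal r < rp} F"
    and contG: "continuous_on {r. rm < r \<and> ereal r < rp} G"
    and Fpos: "\<And>r. rm < r \<Longrightarrow> ereal r < rp \<Longrightarrow> F r > 0"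
    and Gpos: "\<And>r. rm < r \<Longrightarrow> ereal r < rp \<Longrightarrow> G r > 0"
  defines "a \<equiv> (\<lambda>r. r ^ n * sqrt (G r / F r))"
    and "b \<equiv> (\<lambda>r. r ^ n * sqrt (F r / G r))"
  shows "(rm > 0 \<longrightarrow>
            (int_diverges_at_left (\<lambda>r. 1 / b r) rm \<longleftrightarrow> int_diverges_at_left a rm) \<and>
            (int_diverges_at_left a rm \<longleftrightarrow> int_diverges_at_left (\<lambda>r. sqrt (a r / b r)) rm))
       \<and> (\<forall>r1. rp = ereal r1 \<longrightarrow>
            (int_diverges_at_right (\<lambda>r. 1 / b r) r1 \<longleftrightarrow> int_diverges_at_right a r1) \<and>
            (int_diverges_at_right a r1 \<longleftrightarrow> int_diverges_at_right (\<lambda>r. sqrt (a r / b r)) r1))"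
proof -
  define D where "D = {r. rm < r \<and> ereal r < rp}"
  have FG: "\<And>r. r \<in> D \<Longrightarrow> F r > 0 \<and> G r > 0" using Fpos Gpos by (simp add: D_def)
  have "D \<subseteq> {0<..}" using rm by (auto simp: D_def)
  from radial_weights_continuous[OF this contF[folded D_def] contG[folded D_def] FG, of n]
  have cont: "continuous_on J a" "continuous_on J (\<lambda>r. 1 / b r)" "continuous_on J (\<lambda>r. sqrt (a r / b r))"
    if "J \<subseteq> D" for J
    using that unfolding a_def b_def by (auto intro: continuous_on_subset)
  have comp: "comparable_on J (\<lambda>r. 1 / b r) a" "comparable_on J a (\<lambda>r. sqrt (a r / b r))"
    if "0 < lo" "J \<subseteq> {lo..hi}" "J \<subseteq> D" for lo hi J
    using radial_weights_comparable[OF that(1,2), of F G n] FG that(3) unfolding a_def b_def by auto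
  show ?thesis
  proof (intro conjI impI allI)
    assume "rm > 0"
    obtain t where t: "rm < t" "ereal t < rp" using ereal_dense2[OF rmp] by auto
    define \<delta> where "\<delta> = t - rm"
    have "\<delta> > 0" using t by (simp add: \<delta>_def)
    have "{rm<..<rm+\<delta>} \<subseteq> D" "{rm<..<rm+\<delta>} \<subseteq> {rm..t}"
      using t by (auto simp: D_def \<delta>_def intro: less_trans[of _ "ereal t"])
    note J = comp[OF \<open>rm > 0\<close> this(2,1)] cont[OF this(1)]
    show "int_diverges_at_left (\<lambda>r. 1 / b r) rm \<longleftrightarrow> int_diverges_at_left a rm"
      by (rule int_diverges_at_left_iff_comparable[OF \<open>\<delta> > 0\<close> J(1) J(4) J(3)])
    show "int_diverges_at_left a rm \<longleftrightarrow> int_diverges_at_left (\<lambda>r. sqrt (a r / b r)) rm"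
      by (rule int_diverges_at_left_iff_comparable[OF \<open>\<delta> > 0\<close> J(2) J(3) J(5)])
  next
    fix r1 assume r1: "rp = ereal r1"
    define \<delta> where "\<delta> = (r1 - rm) / 2"
    have "\<delta> > 0" "0 < r1 - \<delta>" using rmp rm r1 by (auto simp: \<delta>_def)
    have "{r1-\<delta><..<r1} \<subseteq> D" "{r1-\<delta><..<r1} \<subseteq> {r1 - \<delta>..r1}"
      using rmp r1 by (auto simp: D_def \<delta>_def field_simps)
    note J = comp[OF \<open>0 < r1 - \<delta>\<close> this(2,1)] cont[OF this(1)]
    show "int_diverges_at_right (\<lambda>r. 1 / b r) r1 \<longleftrightarrow> int_diverges_at_right a r1"
      by (rule int_diverges_at_right_iff_comparable[OF \<open>\<delta> > 0\<close> J(1) J(4) J(3)])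
    show "int_diverges_at_right a r1 \<longleftrightarrow> int_diverges_at_right (\<lambda>r. sqrt (a r / b r)) r1"
      by (rule int_diverges_at_right_iff_comparable[OF \<open>\<delta> > 0\<close> J(2) J(3) J(5)])
  qed
qed

end
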